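(* Let $T$ be a bounded linear operator on a Banach space $X$ such that $\|T^n\|^{1/n}=o(1/n)$ as $n\to\infty$. Then $I+T$ does not satisfy the Kitai Criterion.
   Context: A bounded linear operator $A$ on a Banach space $X$ satisfies the Kitai Criterion if there exist two dense subsets $E$ and $F$ of $X$ and a map $S:F\to F$ such that $ASy=y$, $S^k y\to 0$ and $A^k x\to 0$ as $k\to\infty$ for every $y\in F$ and $x\in E$. *)

theory Defs
  imports "HOL-Analysis.Analysis" "HOL-Library.Landau_Symbols"
begin

definition kitai_criterion :: "('a::real_normed_vector \<Rightarrow> 'a) \<Rightarrow> bool" where
  "kitai_criterion A \<longleftrightarrow>
     (\<exists>E F (S::'a \<Rightarrow> 'a).
        closure E = UNIV \<and> closure F = UNIV \<and> S ` F \<subseteq> F \<and>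
        (\<forall>y\<in>F. A (S y) = y \<and> (\<lambda>k. (S ^^ k) y) \<longlonglongrightarrow> 0) \<and>
        (\<forall>x\<in>E. (\<lambda>k. (A ^^ k) x) \<longlonglongrightarrow> 0))"

end

theory Submission
  imports Defs "HOL-Complex_Analysis.Complex_Analysis"
begin

text \<open>Suppose \<open>(I + T)\<^sup>k x \<rightarrow> 0\<close>. Take a norming functional \<open>\<phi>\<close> for \<open>x\<close> (Hahn--Banach) and put
\<open>a j = \<phi> (T\<^sup>j x)\<close>. The growth condition gives \<open>\<bar>a j\<bar> \<le> K\<^sub>\<eta> (\<eta> / j)\<^sup>j\<close> for every \<open>\<eta> > 0\<close>, so
\<open>h s = \<Sum> a j s\<^sup>j / j!\<close> is entire and \<open>w \<mapsto> h (w\<^sup>2)\<close> has exponential type zero. Since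
\<open>e\<^sup>s h s = \<Sum>\<^sub>k \<phi> ((I + T)\<^sup>k x) s\<^sup>k / k!\<close>, the function \<open>h\<close> is bounded on \<open>[0, \<infinity>)\<close> and tends to zero
there. By Phragm\<acute>en--Lindel\<ouml>f, an entire function of zero exponential type bounded on the real
line is constant, hence \<open>\<parallel>x\<parallel> = a 0 = h 0 = 0\<close>. So the only vector whose orbit under \<open>I + T\<close>
tends to zero is \<open>0\<close>, and no dense set of such vectors exists.\<close>

section \<open>Norming functionals\<close>

text \<open>A linear functional on a subspace is encoded by its graph, so that the extension
argument becomes Zorn's lemma for set inclusion.\<close>
definition norm_dominated_graph :: "'a::real_normed_vector \<Rightarrow> ('a \<times> real) set \<Rightarrow> bool" where
  "norm_dominated_graph x G \<longleftrightarrow> (0, 0) \<in> G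
    \<and> (\<forall>v a w b. (v, a) \<in> G \<longrightarrow> (w, b) \<in> G \<longrightarrow> (v + w, a + b) \<in> G)
    \<and> (\<forall>c v a. (v, a) \<in> G \<longrightarrow> (c *\<^sub>R v, c * a) \<in> G)
    \<and> (\<forall>v a b. (v, a) \<in> G \<longrightarrow> (v, b) \<in> G \<longrightarrow> a = b)
    \<and> (\<forall>v a. (v, a) \<in> G \<longrightarrow> a \<le> norm v)
    \<and> (x, norm x) \<in> G"

lemma norm_dominated_graphD:
  assumes "norm_dominated_graph x G"
  shows "(0, 0) \<in> G"
    and "(v, a) \<in> G \<Longrightarrow> (w, b) \<in> G \<Longrightarrow> (v + w, a + b) \<in> G"
    and "(v, a) \<in> G \<Longrightarrow> (c *\<^sub>R v, c * a) \<in> G"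
    and "(v, a) \<in> G \<Longrightarrow> (v, b) \<in> G \<Longrightarrow> a = b"
    and "(v, a) \<in> G \<Longrightarrow> a \<le> norm v"
    and "(x, norm x) \<in> G"
  using assms unfolding norm_dominated_graph_def by blast+

lemma norm_dominated_graph_line:
  "norm_dominated_graph x (range (\<lambda>t. (t *\<^sub>R x, t * norm x)))"
  unfolding norm_dominated_graph_def
proof (intro conjI allI impI)
  show "(0, 0) \<in> range (\<lambda>t. (t *\<^sub>R x, t * norm x))"
    by (rule image_eqI[of _ _ 0]) simp_all
  show "(x, norm x) \<in> range (\<lambda>t. (t *\<^sub>R x, t * norm x))"
    by (rule image_eqI[of _ _ 1]) simp_all
next
  fix v a w b
  assume "(v, a) \<in> range (\<lambda>t. (t *\<^sub>R x, t * norm x))" "(w, b) \<in> range (\<lambda>t. (t *\<^sub>R x, t * norm x))"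
  then obtain t s where "v = t *\<^sub>R x" "a = t * norm x" "w = s *\<^sub>R x" "b = s * norm x"
    by auto
  then show "(v + w, a + b) \<in> range (\<lambda>t. (t *\<^sub>R x, t * norm x))"
    by (intro image_eqI[of _ _ "t + s"]) (simp_all add: scaleR_add_left distrib_right)
next
  fix c v a
  assume "(v, a) \<in> range (\<lambda>t. (t *\<^sub>R x, t * norm x))"
  then obtain t where "v = t *\<^sub>R x" "a = t * norm x"
    by auto
  then show "(c *\<^sub>R v, c * a) \<in> range (\<lambda>t. (t *\<^sub>R x, t * norm x))"
    by (intro image_eqI[of _ _ "c * t"]) simp_all
next
  fix v a b
  assume "(v, a) \<in> range (\<lambda>t. (t *\<^sub>R x, t * norm x))" "(v, b) \<in> range (\<lambda>t. (t *\<^sub>R x, t * norm x))"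
  then obtain t s where ts: "v = t *\<^sub>R x" "a = t * norm x" "v = s *\<^sub>R x" "b = s * norm x"
    by (metis (no_types, lifting) Pair_inject rangeE)
  then show "a = b"
    by (cases "x = 0") (auto simp: scaleR_cancel_right)
next
  fix v a
  assume "(v, a) \<in> range (\<lambda>t. (t *\<^sub>R x, t * norm x))"
  then obtain t where "v = t *\<^sub>R x" "a = t * norm x"
    by auto
  then show "a \<le> norm v"
    by (simp add: mult_right_mono)
qed

lemma norm_dominated_graph_Union_chain:
  assumes "C \<noteq> {}" "\<And>G. G \<in> C \<Longrightarrow> norm_dominated_graph x G" "chain\<^sub>\<subseteq> C"
  shows "norm_dominated_graph x (\<Union>C)"
proof -
  have common: "\<exists>G\<in>C. p \<in> G \<and> q \<in> G" if "p \<in> \<Union>C" "q \<in> \<Union>C" for p q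
    using that assms(3) unfolding chain_subset_def by blast
  obtain G0 where "G0 \<in> C"
    using assms(1) by blast
  show ?thesis
    unfolding norm_dominated_graph_def
  proof (intro conjI allI impI)
    show "(0, 0) \<in> \<Union>C"
      using \<open>G0 \<in> C\<close> assms(2)[THEN norm_dominated_graphD(1)] by blast
    show "(x, norm x) \<in> \<Union>C"
      using \<open>G0 \<in> C\<close> assms(2)[THEN norm_dominated_graphD(6)] by blast
  next
    fix v a w b
    assume "(v, a) \<in> \<Union>C" "(w, b) \<in> \<Union>C"
    then obtain G where "G \<in> C" "(v, a) \<in> G" "(w, b) \<in> G"
      using common by blast
    then show "(v + w, a + b) \<in> \<Union>C"
      using assms(2) norm_dominated_graphD(2) by blast
  next
    fix c v a
    assume "(v, a) \<in> \<Union>C"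
    then show "(c *\<^sub>R v, c * a) \<in> \<Union>C"
      using assms(2) norm_dominated_graphD(3) by blast
  next
    fix v a b
    assume "(v, a) \<in> \<Union>C" "(v, b) \<in> \<Union>C"
    then obtain G where "G \<in> C" "(v, a) \<in> G" "(v, b) \<in> G"
      using common by blast
    then show "a = b"
      using assms(2) norm_dominated_graphD(4) by blast
  next
    fix v a
    assume "(v, a) \<in> \<Union>C"
    then show "a \<le> norm v"
      using assms(2) norm_dominated_graphD(5) by blast
  qed
qed

text \<open>The classical one-dimensional Hahn--Banach step: the value \<open>c\<close> at the new vector \<open>v\<close> is
squeezed between \<open>a - \<parallel>w - v\<parallel>\<close> and \<open>\<parallel>w + v\<parallel> - a\<close>, and scaling by \<open>t\<close> turns these two bounds
into domination along the whole line \<open>w + t v\<close>.\<close>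
lemma norm_dominated_graph_extension_value:
  assumes "norm_dominated_graph x G"
  obtains c where "\<And>w a t. (w, a) \<in> G \<Longrightarrow> a + t * c \<le> norm (w + t *\<^sub>R v)"
proof -
  note G = norm_dominated_graphD[OF assms]
  define c where "c = Sup {a - norm (w - v) | w a. (w, a) \<in> G}"
  have gap: "a1 - norm (w1 - v) \<le> norm (w2 + v) - a2" if "(w1, a1) \<in> G" "(w2, a2) \<in> G"
    for w1 a1 w2 a2
  proof -
    have "a1 + a2 \<le> norm ((w1 - v) + (w2 + v))"
      using G(5)[OF G(2)[OF that]] by (simp add: algebra_simps)
    also have "\<dots> \<le> norm (w1 - v) + norm (w2 + v)"
      by (rule norm_triangle_ineq)
    finally show ?thesis
      by simp
  qed
  have c_lower: "a - norm (w - v) \<le> c" if "(w, a) \<in> G" for w a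
    unfolding c_def
    by (rule cSup_upper) (use that gap[OF _ G(1)] in \<open>auto simp: bdd_above_def\<close>)
  have c_upper: "c \<le> norm (w + v) - a" if "(w, a) \<in> G" for w a
    unfolding c_def
    by (rule cSup_least) (use G(1) gap[OF _ that] in auto)
  have "a + t * c \<le> norm (w + t *\<^sub>R v)" if wa: "(w, a) \<in> G" for w a t
  proof (cases t "0::real" rule: linorder_cases)
    case less
    have "inverse (-t) * a - norm (inverse (-t) *\<^sub>R w - v) \<le> c"
      using c_lower[OF G(3)[OF wa]] .
    then have "a - (-t) * norm (inverse (-t) *\<^sub>R w - v) \<le> (-t) * c"
      using less by (simp add: field_simps)
    also have "(-t) * norm (inverse (-t) *\<^sub>R w - v) = norm ((-t) *\<^sub>R (inverse (-t) *\<^sub>R w - v))"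
      using less by simp
    also have "(-t) *\<^sub>R (inverse (-t) *\<^sub>R w - v) = w + t *\<^sub>R v"
      using less by (simp add: scaleR_diff_right)
    finally show ?thesis
      by simp
  next
    case equal
    then show ?thesis
      using G(5)[OF wa] by simp
  next
    case greater
    have "c \<le> norm (inverse t *\<^sub>R w + v) - inverse t * a"
      using c_upper[OF G(3)[OF wa]] .
    then have "t * c \<le> t * norm (inverse t *\<^sub>R w + v) - a"
      using greater by (simp add: field_simps)
    also have "t * norm (inverse t *\<^sub>R w + v) = norm (t *\<^sub>R (inverse t *\<^sub>R w + v))"
      using greater by simp
    also have "t *\<^sub>R (inverse t *\<^sub>R w + v) = w + t *\<^sub>R v"
      using greater by (simp add: scaleR_add_right)
    finally show ?thesis
      by simp
  qed
  then show thesis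
    by (rule that)
qed

lemma norm_dominated_graph_line_coordinate_unique:
  assumes "norm_dominated_graph x G" "\<And>a. (v, a) \<notin> G"
    and "(w1, a1) \<in> G" "(w2, a2) \<in> G" "w1 + t1 *\<^sub>R v = w2 + t2 *\<^sub>R v"
  shows "t1 = t2"
proof (rule ccontr)
  note G = norm_dominated_graphD[OF assms(1)]
  assume "t1 \<noteq> t2"
  have "(w1 + (-1) *\<^sub>R w2, a1 + (-1) * a2) \<in> G"
    using G(2)[OF assms(3) G(3)[OF assms(4)]] .
  then have "(inverse (t2 - t1) *\<^sub>R (w1 - w2), inverse (t2 - t1) * (a1 - a2)) \<in> G"
    using G(3) by simp
  moreover have "w1 - w2 = (t2 - t1) *\<^sub>R v"
    using assms(5) by (simp add: algebra_simps)
  ultimately show False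
    using \<open>t1 \<noteq> t2\<close> assms(2) by simp
qed

lemma norm_dominated_graph_extension:
  assumes "norm_dominated_graph x G" and v: "\<And>a. (v, a) \<notin> G"
    and dom: "\<And>w a t. (w, a) \<in> G \<Longrightarrow> a + t * c \<le> norm (w + t *\<^sub>R v)"
  shows "norm_dominated_graph x {(w + t *\<^sub>R v, a + t * c) | w a t. (w, a) \<in> G}"
    (is "norm_dominated_graph x ?G'")
  unfolding norm_dominated_graph_def
proof (intro conjI allI impI)
  note G = norm_dominated_graphD[OF assms(1)]
  show "(0, 0) \<in> ?G'"
    using G(1) by (intro CollectI exI[of _ 0]) simp
  show "(x, norm x) \<in> ?G'"
    using G(6) by (intro CollectI exI[of _ x] exI[of _ "norm x"] exI[of _ 0]) simp
next
  fix p a q b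
  assume "(p, a) \<in> ?G'" "(q, b) \<in> ?G'"
  then obtain w1 a1 t1 w2 a2 t2 where "(w1, a1) \<in> G" "(w2, a2) \<in> G"
    "p = w1 + t1 *\<^sub>R v" "a = a1 + t1 * c" "q = w2 + t2 *\<^sub>R v" "b = a2 + t2 * c"
    by blast
  then show "(p + q, a + b) \<in> ?G'"
    by (intro CollectI exI[of _ "w1 + w2"] exI[of _ "a1 + a2"] exI[of _ "t1 + t2"])
      (simp add: norm_dominated_graphD(2)[OF assms(1)] scaleR_add_left algebra_simps)
next
  fix r p a
  assume "(p, a) \<in> ?G'"
  then obtain w a' t where "(w, a') \<in> G" "p = w + t *\<^sub>R v" "a = a' + t * c"
    by blast
  then show "(r *\<^sub>R p, r * a) \<in> ?G'"
    by (intro CollectI exI[of _ "r *\<^sub>R w"] exI[of _ "r * a'"] exI[of _ "r * t"])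
      (simp add: norm_dominated_graphD(3)[OF assms(1)] scaleR_add_right distrib_left)
next
  fix p a b
  assume "(p, a) \<in> ?G'" "(p, b) \<in> ?G'"
  then obtain w1 a1 t1 w2 a2 t2 where h: "(w1, a1) \<in> G" "(w2, a2) \<in> G"
    "p = w1 + t1 *\<^sub>R v" "a = a1 + t1 * c" "p = w2 + t2 *\<^sub>R v" "b = a2 + t2 * c"
    by blast
  moreover have "t1 = t2"
    using norm_dominated_graph_line_coordinate_unique[OF assms(1) v h(1,2)] h(3,5) by simp
  ultimately show "a = b"
    using norm_dominated_graphD(4)[OF assms(1)] by (metis add_right_cancel)
next
  fix p a
  assume "(p, a) \<in> ?G'"
  then show "a \<le> norm p"
    using dom by blast
qed

lemma norm_dominated_graph_extend:
  assumes "norm_dominated_graph x G" and v: "\<And>a. (v, a) \<notin> G"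
  shows "\<exists>G'. norm_dominated_graph x G' \<and> G \<subset> G'"
proof -
  obtain c where dom: "\<And>w a t. (w, a) \<in> G \<Longrightarrow> a + t * c \<le> norm (w + t *\<^sub>R v)"
    using norm_dominated_graph_extension_value[OF assms(1)] by blast
  define G' where "G' = {(w + t *\<^sub>R v, a + t * c) | w a t. (w, a) \<in> G}"
  have "G \<subseteq> G'"
  proof
    fix p
    assume "p \<in> G"
    then show "p \<in> G'"
      unfolding G'_def by (intro CollectI exI[of _ "fst p"] exI[of _ "snd p"] exI[of _ 0]) simp
  qed
  moreover have "(v, c) \<in> G'"
    unfolding G'_def using norm_dominated_graphD(1)[OF assms(1)]
    by (intro CollectI exI[of _ 0] exI[of _ 1]) simp
  ultimately show ?thesis
    using norm_dominated_graph_extension[OF assms dom] v unfolding G'_def by blast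
qed

lemma norm_dominated_graph_total_exists:
  obtains M where "norm_dominated_graph x M" "\<And>v. \<exists>a. (v, a) \<in> M"
proof -
  define A where "A = {G. norm_dominated_graph x G}"
  have "\<exists>U\<in>A. \<forall>X\<in>C. X \<subseteq> U" if "C \<in> chains A" for C
  proof (cases "C = {}")
    case True
    then show ?thesis
      using norm_dominated_graph_line A_def by blast
  next
    case False
    have "norm_dominated_graph x (\<Union>C)"
      by (rule norm_dominated_graph_Union_chain[OF False]) (use that in \<open>auto simp: chains_def A_def\<close>)
    then show ?thesis
      unfolding A_def by blast
  qed
  then obtain M where "M \<in> A" and maximal: "\<And>X. X \<in> A \<Longrightarrow> M \<subseteq> X \<Longrightarrow> X = M"
    using Zorn_Lemma2[of A] by (metis (no_types, lifting))
  then have M: "norm_dominated_graph x M"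
    unfolding A_def by simp
  have "\<exists>a. (v, a) \<in> M" for v
  proof (rule ccontr)
    assume "\<nexists>a. (v, a) \<in> M"
    then obtain G' where "norm_dominated_graph x G'" "M \<subset> G'"
      using norm_dominated_graph_extend[OF M] by blast
    then show False
      using maximal[of G'] unfolding A_def by blast
  qed
  with M show thesis
    using that by blast
qed

lemma norming_functional_exists:
  fixes x :: "'a::real_normed_vector"
  obtains \<phi> :: "'a \<Rightarrow> real" where "linear \<phi>" "\<And>v. \<bar>\<phi> v\<bar> \<le> norm v" "\<phi> x = norm x"
proof -
  obtain M where M: "norm_dominated_graph x M" and total: "\<And>v. \<exists>a. (v, a) \<in> M"
    using norm_dominated_graph_total_exists by blast
  note M' = norm_dominated_graphD[OF M]
  define \<phi> where "\<phi> v = (THE a. (v, a) \<in> M)" for v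
  have \<phi>_graph: "(v, \<phi> v) \<in> M" for v
    unfolding \<phi>_def using total[of v] M'(4) by (metis theI)
  have \<phi>_eq: "\<phi> v = a" if "(v, a) \<in> M" for v a
    using M'(4)[OF that \<phi>_graph] by simp
  show thesis
  proof
    show "linear \<phi>"
    proof (rule linearI)
      show "\<phi> (u + v) = \<phi> u + \<phi> v" for u v
        using \<phi>_eq[OF M'(2)[OF \<phi>_graph \<phi>_graph]] .
      show "\<phi> (c *\<^sub>R v) = c *\<^sub>R \<phi> v" for c v
        using \<phi>_eq[OF M'(3)[OF \<phi>_graph]] by simp
    qed
    show "\<bar>\<phi> v\<bar> \<le> norm v" for v
      using M'(5)[OF \<phi>_graph[of v]] M'(5)[OF M'(3)[OF \<phi>_graph[of v], of "-1"]] by simp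
    show "\<phi> x = norm x"
      using \<phi>_eq[OF M'(6)] .
  qed
qed

section \<open>Phragm\<acute>en--Lindel\<ouml>f for functions of zero exponential type\<close>

definition zero_exponential_type_on :: "complex set \<Rightarrow> (complex \<Rightarrow> complex) \<Rightarrow> bool" where
  "zero_exponential_type_on S f \<longleftrightarrow> (\<forall>\<delta>>0. \<exists>C. \<forall>w\<in>S. norm (f w) \<le> C * exp (\<delta> * norm w))"

lemma zero_exponential_type_on_le:
  assumes "zero_exponential_type_on S g" "\<And>w. w \<in> T \<Longrightarrow> w \<in> S \<and> norm (f w) \<le> norm (g w)"
  shows "zero_exponential_type_on T f"
  unfolding zero_exponential_type_on_def
proof (intro allI impI)
  fix \<delta> :: real
  assume "\<delta> > 0"
  then obtain C where "\<forall>w\<in>S. norm (g w) \<le> C * exp (\<delta> * norm w)"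
    using assms(1) unfolding zero_exponential_type_on_def by blast
  then show "\<exists>C. \<forall>w\<in>T. norm (f w) \<le> C * exp (\<delta> * norm w)"
    using assms(2) order_trans by blast
qed

lemma le_of_tendsto_at_right_0:
  fixes g :: "real \<Rightarrow> real"
  assumes "(g \<longlongrightarrow> b) (at_right 0)" "\<And>\<sigma>. \<sigma> > 0 \<Longrightarrow> y \<le> g \<sigma>"
  shows "y \<le> b"
proof (rule tendsto_lowerbound[OF assms(1)])
  show "\<forall>\<^sub>F \<sigma> in at_right 0. y \<le> g \<sigma>"
    by (rule eventually_mono[OF eventually_at_right_less]) (rule assms(2))
qed simp

lemma maximum_modulus_unbounded_closed:
  assumes holo: "f holomorphic_on S" and "closed S" "w \<in> S"
    and boundary: "\<And>z. z \<in> S \<Longrightarrow> z \<notin> interior S \<Longrightarrow> norm (f z) \<le> B"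
    and large: "eventually (\<lambda>R. \<forall>z\<in>S. norm z = R \<longrightarrow> norm (f z) \<le> B) at_top"
  shows "norm (f w) \<le> B"
proof -
  obtain R0 where R0: "\<And>R z. R \<ge> R0 \<Longrightarrow> z \<in> S \<Longrightarrow> norm z = R \<Longrightarrow> norm (f z) \<le> B"
    using large unfolding eventually_at_top_linorder by blast
  define R where "R = max R0 (norm w)"
  have closed: "closed (S \<inter> cball 0 R)"
    using \<open>closed S\<close> by blast
  show ?thesis
  proof (rule maximum_modulus_frontier[of f "S \<inter> cball 0 R"])
    show "f holomorphic_on interior (S \<inter> cball 0 R)"
      by (rule holomorphic_on_subset[OF holo]) (meson inf.boundedE interior_subset)
    show "continuous_on (closure (S \<inter> cball 0 R)) f"
      using holomorphic_on_imp_continuous_on[OF holo] closed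
      by (simp add: closure_closed continuous_on_subset)
    show "bounded (S \<inter> cball 0 R)" "w \<in> S \<inter> cball 0 R"
      using \<open>w \<in> S\<close> by (simp_all add: R_def bounded_Int)
    have "frontier (S \<inter> cball 0 R) \<subseteq> (S - interior S) \<union> (S \<inter> sphere 0 R)"
      unfolding frontier_Int_closed[OF \<open>closed S\<close> closed_cball] frontier_cball
      using \<open>closed S\<close> by (auto simp: frontier_def)
    then show "norm (f z) \<le> B" if "z \<in> frontier (S \<inter> cball 0 R)" for z
      using that boundary R0[of R z] by (auto simp: R_def)
  qed
qed

lemma quadrant_boundary_on_axes:
  assumes "z \<in> {z. Re z \<ge> 0 \<and> Im z \<ge> 0}" "z \<notin> interior {z. Re z \<ge> 0 \<and> Im z \<ge> 0}"
  shows "z = of_real (Re z) \<and> Re z \<ge> 0 \<or> z = \<i> * of_real (Im z) \<and> Im z \<ge> 0"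
proof -
  have "{z. Re z > 0} \<inter> {z. Im z > 0} \<subseteq> interior {z. Re z \<ge> 0 \<and> Im z \<ge> 0}"
    by (rule interior_maximal) (auto simp: open_halfspace_Re_gt open_halfspace_Im_gt)
  then have "\<not> (Re z > 0 \<and> Im z > 0)"
    using assms(2) by blast
  then show ?thesis
    using assms(1) by (auto simp: complex_eq_iff)
qed

lemma upper_half_plane_boundary_real:
  assumes "z \<in> {z. Im z \<ge> 0}" "z \<notin> interior {z. Im z \<ge> 0}"
  shows "z = of_real (Re z)"
proof -
  have "{z. Im z > 0} \<subseteq> interior {z. Im z \<ge> 0}"
    by (rule interior_maximal) (auto simp: open_halfspace_Im_gt)
  then have "\<not> Im z > 0"
    using assms(2) by blast
  then show ?thesis
    using assms(1) by (auto simp: complex_eq_iff)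
qed

text \<open>The auxiliary factor \<open>exp ((-\<sigma> + \<i> \<sigma>) z)\<close> has modulus \<open>exp (-\<sigma> (Re z + Im z))\<close>, which is at
most \<open>exp (-\<sigma> \<parallel>z\<parallel>)\<close> in the quadrant and so beats the zero-type growth of \<open>f\<close> on large arcs.\<close>
lemma Phragmen_Lindelof_quadrant_damped:
  fixes f :: "complex \<Rightarrow> complex"
  assumes holo: "f holomorphic_on UNIV" and "B > 0"
    and type: "zero_exponential_type_on {z. Re z \<ge> 0 \<and> Im z \<ge> 0} f"
    and real_axis: "\<And>t. t \<ge> 0 \<Longrightarrow> norm (f (of_real t)) \<le> B"
    and imag_axis: "\<And>t. t \<ge> 0 \<Longrightarrow> norm (f (\<i> * of_real t)) \<le> B"
    and w: "Re w \<ge> 0" "Im w \<ge> 0"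
    and "\<sigma> > 0"
  shows "norm (f w) \<le> B * exp (\<sigma> * (Re w + Im w))"
proof -
  define Q where "Q = {z. Re z \<ge> 0 \<and> Im z \<ge> 0}"
  have "\<sigma> / 2 > 0"
    using \<open>\<sigma> > 0\<close> by simp
  then obtain C where C: "\<forall>z\<in>Q. norm (f z) \<le> C * exp (\<sigma> / 2 * norm z)"
    using type unfolding zero_exponential_type_on_def Q_def by blast
  define F where "F z = f z * exp (Complex (-\<sigma>) \<sigma> * z)" for z
  have norm_F: "norm (F z) = norm (f z) * exp (- \<sigma> * (Re z + Im z))" for z
    by (simp add: F_def norm_mult algebra_simps)
  have arc: "norm (F z) \<le> C * exp (- (\<sigma> / 2) * norm z)" if "z \<in> Q" for z
  proof -
    have "norm z \<le> Re z + Im z"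
      using cmod_le[of z] that by (simp add: Q_def)
    then have "exp (\<sigma> / 2 * norm z) * exp (- \<sigma> * (Re z + Im z)) \<le> exp (- (\<sigma> / 2) * norm z)"
      using \<open>\<sigma> > 0\<close> by (simp flip: exp_add)
    moreover have "C \<ge> 0"
      using C that norm_ge_zero[of "f z"] by (meson exp_gt_zero order.trans zero_le_mult_iff linorder_not_le)
    moreover have "norm (F z) \<le> C * exp (\<sigma> / 2 * norm z) * exp (- \<sigma> * (Re z + Im z))"
      unfolding norm_F using C that by (simp add: mult_right_mono)
    ultimately show ?thesis
      by (simp add: mult.assoc mult_left_mono order_trans)
  qed
  have "norm (F w) \<le> B"
  proof (rule maximum_modulus_unbounded_closed[of F Q])
    show "F holomorphic_on Q"
      unfolding F_def by (intro holomorphic_intros holomorphic_on_subset[OF holo]) auto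
    show "closed Q"
      unfolding Q_def Collect_conj_eq by (intro closed_Int closed_halfspace_Re_ge closed_halfspace_Im_ge)
    show "w \<in> Q"
      using w by (simp add: Q_def)
  next
    fix z
    assume "z \<in> Q" "z \<notin> interior Q"
    then have "norm (f z) \<le> B"
      using quadrant_boundary_on_axes[of z] real_axis[of "Re z"] imag_axis[of "Im z"]
      unfolding Q_def by auto
    moreover have "exp (- \<sigma> * (Re z + Im z)) \<le> 1"
      using \<open>z \<in> Q\<close> \<open>\<sigma> > 0\<close> by (simp add: Q_def)
    ultimately show "norm (F z) \<le> B"
      unfolding norm_F by (meson exp_ge_zero mult_left_le norm_ge_zero order_trans)
  next
    have "((\<lambda>R. C * exp (- (\<sigma> / 2) * R)) \<longlongrightarrow> 0) at_top"
      using \<open>\<sigma> > 0\<close> by real_asymp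
    then have "eventually (\<lambda>R. C * exp (- (\<sigma> / 2) * R) < B) at_top"
      using \<open>B > 0\<close> by (rule order_tendstoD(2))
    then show "eventually (\<lambda>R. \<forall>z\<in>Q. norm z = R \<longrightarrow> norm (F z) \<le> B) at_top"
    proof (rule eventually_mono, intro ballI impI)
      fix R z
      assume "C * exp (- (\<sigma> / 2) * R) < B" "z \<in> Q" "norm z = R"
      then show "norm (F z) \<le> B"
        using arc[of z] by simp
    qed
  qed
  then have "norm (f w) / exp (\<sigma> * (Re w + Im w)) \<le> B"
    unfolding norm_F by (simp add: exp_minus divide_inverse)
  then show "norm (f w) \<le> B * exp (\<sigma> * (Re w + Im w))"
    by (simp add: pos_divide_le_eq)
qed

lemma Phragmen_Lindelof_quadrant:
  fixes f :: "complex \<Rightarrow> complex"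
  assumes "f holomorphic_on UNIV" and "B > 0"
    and "zero_exponential_type_on {z. Re z \<ge> 0 \<and> Im z \<ge> 0} f"
    and "\<And>t. t \<ge> 0 \<Longrightarrow> norm (f (of_real t)) \<le> B"
    and "\<And>t. t \<ge> 0 \<Longrightarrow> norm (f (\<i> * of_real t)) \<le> B"
    and "Re w \<ge> 0" "Im w \<ge> 0"
  shows "norm (f w) \<le> B"
proof (rule le_of_tendsto_at_right_0)
  have "((\<lambda>\<sigma>. B * exp (\<sigma> * (Re w + Im w))) \<longlongrightarrow> B * exp (0 * (Re w + Im w))) (at_right 0)"
    by (intro tendsto_intros)
  then show "((\<lambda>\<sigma>. B * exp (\<sigma> * (Re w + Im w))) \<longlongrightarrow> B) (at_right 0)"
    by simp
  show "norm (f w) \<le> B * exp (\<sigma> * (Re w + Im w))" if "\<sigma> > 0" for \<sigma>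
    using Phragmen_Lindelof_quadrant_damped[OF assms that] .
qed

lemma norm_one_minus_imaginary_mult_ge:
  assumes "\<eta> \<ge> 0" "Im z \<ge> 0"
  shows "norm (1 - \<i> * of_real \<eta> * z) \<ge> 1" "norm (1 - \<i> * of_real \<eta> * z) \<ge> \<eta> * norm z"
proof -
  let ?D = "1 - \<i> * of_real \<eta> * z"
  have "1 \<le> Re ?D"
    using assms by simp
  also have "\<dots> \<le> norm ?D"
    by (rule complex_Re_le_cmod)
  finally show "norm ?D \<ge> 1" .
  have "(\<eta> * norm z)\<^sup>2 = (\<eta> * Re z)\<^sup>2 + (\<eta> * Im z)\<^sup>2"
    by (simp add: power_mult_distrib cmod_power2 algebra_simps)
  also have "\<dots> \<le> (Im ?D)\<^sup>2 + (Re ?D)\<^sup>2"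
    using assms by (simp add: power2_eq_square algebra_simps)
  also have "\<dots> = (norm ?D)\<^sup>2"
    by (simp add: cmod_power2)
  finally show "norm ?D \<ge> \<eta> * norm z"
    using assms by (simp add: power2_le_iff_abs_le)
qed

text \<open>Lindel\<ouml>f's trick: \<open>f / (1 - \<i> \<eta> z)\<close> tends to zero in the closed upper half-plane, so the
maximum principle bounds it by \<open>M\<close>; then let \<open>\<eta> \<rightarrow> 0\<close>.\<close>
lemma bounded_upper_half_plane_le_linear:
  fixes f :: "complex \<Rightarrow> complex"
  assumes holo: "f holomorphic_on UNIV" and "M > 0"
    and real_axis: "\<And>t. norm (f (of_real t)) \<le> M"
    and bounded: "\<And>z. Im z \<ge> 0 \<Longrightarrow> norm (f z) \<le> K"
    and w: "Im w \<ge> 0"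
    and "\<eta> > 0"
  shows "norm (f w) \<le> M * (1 + \<eta> * norm w)"
proof -
  define H where "H = {z. Im z \<ge> 0}"
  define D where "D z = 1 - \<i> * of_real \<eta> * z" for z
  have D: "norm (D z) \<ge> 1" "norm (D z) \<ge> \<eta> * norm z" if "z \<in> H" for z
    using norm_one_minus_imaginary_mult_ge[of \<eta> z] \<open>\<eta> > 0\<close> that by (simp_all add: D_def H_def)
  have "norm (f w / D w) \<le> M"
  proof (rule maximum_modulus_unbounded_closed[of "\<lambda>z. f z / D z" H])
    show "(\<lambda>z. f z / D z) holomorphic_on H"
    proof (rule holomorphic_on_divide)
      show "f holomorphic_on H"
        by (rule holomorphic_on_subset[OF holo]) simp
      show "D holomorphic_on H"
        unfolding D_def by (intro holomorphic_intros)
      show "D z \<noteq> 0" if "z \<in> H" for z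
        using D(1)[OF that] by auto
    qed
    show "closed H"
      unfolding H_def by (rule closed_halfspace_Im_ge)
    show "w \<in> H"
      using w by (simp add: H_def)
  next
    fix z
    assume "z \<in> H" "z \<notin> interior H"
    then have "norm (f z) \<le> M"
      using upper_half_plane_boundary_real[of z] real_axis[of "Re z"] unfolding H_def by simp
    moreover have "norm (f z) / norm (D z) \<le> norm (f z) / 1"
      using D(1)[OF \<open>z \<in> H\<close>] by (intro divide_left_mono) auto
    ultimately show "norm (f z / D z) \<le> M"
      by (simp add: norm_divide)
  next
    have "eventually (\<lambda>R. R \<ge> max 1 (K / (\<eta> * M))) at_top"
      by (rule eventually_ge_at_top)
    then show "eventually (\<lambda>R. \<forall>z\<in>H. norm z = R \<longrightarrow> norm (f z / D z) \<le> M) at_top"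
    proof (rule eventually_mono, intro ballI impI)
      fix R z
      assume "R \<ge> max 1 (K / (\<eta> * M))" "z \<in> H" "norm z = R"
      then have "K \<le> M * (\<eta> * norm z)"
        using \<open>\<eta> > 0\<close> \<open>M > 0\<close> by (simp add: pos_divide_le_eq algebra_simps)
      also have "\<dots> \<le> M * norm (D z)"
        using D(2)[OF \<open>z \<in> H\<close>] \<open>M > 0\<close> by simp
      finally have "norm (f z) \<le> M * norm (D z)"
        using bounded[of z] \<open>z \<in> H\<close> by (simp add: H_def)
      moreover have "norm (D z) > 0"
        using D(1)[OF \<open>z \<in> H\<close>] by linarith
      ultimately show "norm (f z / D z) \<le> M"
        by (simp add: norm_divide pos_divide_le_eq mult.commute)
    qed
  qed
  moreover have "norm (D w) \<le> 1 + \<eta> * norm w"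
    using norm_triangle_ineq4[of 1 "\<i> * of_real \<eta> * w"] \<open>\<eta> > 0\<close> by (simp add: D_def norm_mult)
  moreover have "norm (f w) = norm (f w / D w) * norm (D w)"
    using D(1)[of w] w by (auto simp: H_def norm_divide)
  ultimately show "norm (f w) \<le> M * (1 + \<eta> * norm w)"
    using \<open>M > 0\<close> by (simp add: mult_mono')
qed

lemma bounded_upper_half_plane_le:
  fixes f :: "complex \<Rightarrow> complex"
  assumes "f holomorphic_on UNIV" and "M > 0"
    and "\<And>t. norm (f (of_real t)) \<le> M"
    and "\<And>z. Im z \<ge> 0 \<Longrightarrow> norm (f z) \<le> K"
    and "Im w \<ge> 0"
  shows "norm (f w) \<le> M"
proof (rule le_of_tendsto_at_right_0)
  have "((\<lambda>\<eta>. M * (1 + \<eta> * norm w)) \<longlongrightarrow> M * (1 + 0 * norm w)) (at_right 0)"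
    by (intro tendsto_intros)
  then show "((\<lambda>\<eta>. M * (1 + \<eta> * norm w)) \<longlongrightarrow> M) (at_right 0)"
    by simp
  show "norm (f w) \<le> M * (1 + \<eta> * norm w)" if "\<eta> > 0" for \<eta>
    using bounded_upper_half_plane_le_linear[OF assms that] .
qed

lemma Phragmen_Lindelof_upper_half_plane_axes:
  fixes f :: "complex \<Rightarrow> complex"
  assumes holo: "f holomorphic_on UNIV" and "B > 0"
    and type: "zero_exponential_type_on {z. Im z \<ge> 0} f"
    and real_axis: "\<And>t. norm (f (of_real t)) \<le> B"
    and imag_axis: "\<And>t. t \<ge> 0 \<Longrightarrow> norm (f (\<i> * of_real t)) \<le> B"
    and "Im w \<ge> 0"
  shows "norm (f w) \<le> B"
proof (cases "Re w \<ge> 0")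
  case True
  have "zero_exponential_type_on {z. Re z \<ge> 0 \<and> Im z \<ge> 0} f"
    by (rule zero_exponential_type_on_le[OF type]) simp
  then show ?thesis
    by (rule Phragmen_Lindelof_quadrant[OF holo \<open>B > 0\<close>]) (use real_axis imag_axis True \<open>Im w \<ge> 0\<close> in simp_all)
next
  case False
  define f' where "f' z = f (\<i> * z)" for z
  have "norm (f' (- \<i> * w)) \<le> B"
  proof (rule Phragmen_Lindelof_quadrant[where f=f' and w="- \<i> * w", OF _ \<open>B > 0\<close>])
    show "f' holomorphic_on UNIV"
      unfolding f'_def
      by (rule holomorphic_on_compose_gen[of "\<lambda>z. \<i> * z" UNIV f UNIV, unfolded o_def, OF _ holo])
        (simp_all add: holomorphic_on_mult holomorphic_on_const holomorphic_on_id)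
    show "zero_exponential_type_on {z. Re z \<ge> 0 \<and> Im z \<ge> 0} f'"
      unfolding zero_exponential_type_on_def
    proof (intro allI impI)
      fix \<delta> :: real
      assume "\<delta> > 0"
      then obtain C where C: "\<forall>z\<in>{z. Im z \<ge> 0}. norm (f z) \<le> C * exp (\<delta> * norm z)"
        using type unfolding zero_exponential_type_on_def by blast
      have "norm (f' z) \<le> C * exp (\<delta> * norm z)" if "Re z \<ge> 0" for z
        using C[rule_format, of "\<i> * z"] that by (simp add: f'_def norm_mult)
      then have "\<forall>z\<in>{z. Re z \<ge> 0 \<and> Im z \<ge> 0}. norm (f' z) \<le> C * exp (\<delta> * norm z)"
        by blast
      then show "\<exists>C. \<forall>z\<in>{z. Re z \<ge> 0 \<and> Im z \<ge> 0}. norm (f' z) \<le> C * exp (\<delta> * norm z)" ..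
    qed
    show "norm (f' (of_real t)) \<le> B" if "t \<ge> 0" for t
      using imag_axis[OF that] by (simp add: f'_def)
    show "norm (f' (\<i> * of_real t)) \<le> B" for t
      using real_axis[of "- t"] by (simp add: f'_def)
    show "Re (- \<i> * w) \<ge> 0" "Im (- \<i> * w) \<ge> 0"
      using False \<open>Im w \<ge> 0\<close> by simp_all
  qed
  then show ?thesis
    by (simp add: f'_def)
qed

text \<open>The factor \<open>exp (\<i> \<epsilon> z)\<close> makes \<open>g\<close> decay along the positive imaginary axis, so that the
quadrant version bounds the product; Lindel\<ouml>f's lemma then sharpens the bound to \<open>M\<close>.\<close>
lemma Phragmen_Lindelof_upper_half_plane_damped:
  fixes g :: "complex \<Rightarrow> complex"
  assumes holo: "g holomorphic_on UNIV" and "M > 0"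
    and type: "zero_exponential_type_on {z. Im z \<ge> 0} g"
    and real_axis: "\<And>t. norm (g (of_real t)) \<le> M"
    and w: "Im w \<ge> 0"
    and "\<epsilon> > 0"
  shows "norm (g w) \<le> M * exp (\<epsilon> * Im w)"
proof -
  define f where "f z = g z * exp (\<i> * of_real \<epsilon> * z)" for z
  have norm_f: "norm (f z) = norm (g z) * exp (- \<epsilon> * Im z)" for z
    by (simp add: f_def norm_mult)
  have f_le_g: "norm (f z) \<le> norm (g z)" if "Im z \<ge> 0" for z
    unfolding norm_f using that \<open>\<epsilon> > 0\<close> by (simp add: mult_left_le)
  have holo_f: "f holomorphic_on UNIV"
    unfolding f_def by (intro holomorphic_intros holo)
  have "\<epsilon> / 2 > 0"
    using \<open>\<epsilon> > 0\<close> by simp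
  then obtain C where C: "\<forall>z\<in>{z. Im z \<ge> 0}. norm (g z) \<le> C * exp (\<epsilon> / 2 * norm z)"
    using type unfolding zero_exponential_type_on_def by blast
  have "norm (g 0) \<le> C"
    using C[rule_format, of 0] by simp
  then have "C \<ge> 0"
    using norm_ge_zero order_trans by blast
  have "norm (f z) \<le> max M C" if "Im z \<ge> 0" for z
  proof (rule Phragmen_Lindelof_upper_half_plane_axes[OF holo_f _ _ _ _ that])
    show "zero_exponential_type_on {z. Im z \<ge> 0} f"
      by (rule zero_exponential_type_on_le[OF type]) (simp add: f_le_g)
    show "norm (f (of_real t)) \<le> max M C" for t
      using f_le_g[of "of_real t"] real_axis[of t] by simp
  next
    fix t :: real
    assume "t \<ge> 0"
    have "norm (g (\<i> * of_real t)) \<le> C * exp (\<epsilon> / 2 * t)"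
      using C[rule_format, of "\<i> * of_real t"] \<open>t \<ge> 0\<close> by (simp add: norm_mult)
    then have "norm (f (\<i> * of_real t)) \<le> C * exp (\<epsilon> / 2 * t) * exp (- \<epsilon> * t)"
      unfolding norm_f by (simp add: mult_right_mono)
    also have "\<dots> = C * exp (- (\<epsilon> / 2) * t)"
      by (simp add: mult.assoc flip: exp_add)
    also have "\<dots> \<le> C"
      using \<open>C \<ge> 0\<close> \<open>t \<ge> 0\<close> \<open>\<epsilon> > 0\<close> by (simp add: mult_left_le)
    finally show "norm (f (\<i> * of_real t)) \<le> max M C"
      by simp
  qed (use \<open>M > 0\<close> in simp)
  moreover have "norm (f (of_real t)) \<le> M" for t
    using f_le_g[of "of_real t"] real_axis[of t] by simp
  ultimately have "norm (f w) \<le> M"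
    using bounded_upper_half_plane_le[OF holo_f \<open>M > 0\<close> _ _ w] by blast
  then have "norm (g w) / exp (\<epsilon> * Im w) \<le> M"
    unfolding norm_f by (simp add: exp_minus divide_inverse)
  then show "norm (g w) \<le> M * exp (\<epsilon> * Im w)"
    by (simp add: pos_divide_le_eq)
qed

lemma Phragmen_Lindelof_upper_half_plane:
  fixes g :: "complex \<Rightarrow> complex"
  assumes "g holomorphic_on UNIV" and "M > 0"
    and "zero_exponential_type_on {z. Im z \<ge> 0} g"
    and "\<And>t. norm (g (of_real t)) \<le> M"
    and "Im w \<ge> 0"
  shows "norm (g w) \<le> M"
proof (rule le_of_tendsto_at_right_0)
  have "((\<lambda>\<epsilon>. M * exp (\<epsilon> * Im w)) \<longlongrightarrow> M * exp (0 * Im w)) (at_right 0)"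
    by (intro tendsto_intros)
  then show "((\<lambda>\<epsilon>. M * exp (\<epsilon> * Im w)) \<longlongrightarrow> M) (at_right 0)"
    by simp
  show "norm (g w) \<le> M * exp (\<epsilon> * Im w)" if "\<epsilon> > 0" for \<epsilon>
    using Phragmen_Lindelof_upper_half_plane_damped[OF assms that] .
qed

lemma zero_exponential_type_bounded_on_real_axis_constant:
  fixes g :: "complex \<Rightarrow> complex"
  assumes holo: "g holomorphic_on UNIV"
    and type: "zero_exponential_type_on UNIV g"
    and real_axis: "\<And>t. norm (g (of_real t)) \<le> M"
  shows "g constant_on UNIV"
proof (rule Liouville_theorem[OF holo])
  define M' where "M' = max M 1"
  have "M' > 0" "\<And>t. norm (g (of_real t)) \<le> M'"
    using real_axis by (auto simp: M'_def intro: max.coboundedI1)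
  have "norm (g w) \<le> M'" if "Im w \<ge> 0" for w
    by (rule Phragmen_Lindelof_upper_half_plane[OF holo \<open>M' > 0\<close> _ \<open>\<And>t. norm (g (of_real t)) \<le> M'\<close> that])
      (rule zero_exponential_type_on_le[OF type], simp)
  moreover have "norm (g w) \<le> M'" if "Im w < 0" for w
  proof -
    have "norm ((\<lambda>z. g (- z)) (- w)) \<le> M'"
    proof (rule Phragmen_Lindelof_upper_half_plane[where g="\<lambda>z. g (- z)" and w="- w", OF _ \<open>M' > 0\<close>])
      show "(\<lambda>z. g (- z)) holomorphic_on UNIV"
        by (rule holomorphic_on_compose_gen[of uminus UNIV g UNIV, unfolded o_def, OF _ holo])
          (simp_all add: holomorphic_on_minus holomorphic_on_id)
      show "zero_exponential_type_on {z. Im z \<ge> 0} (\<lambda>z. g (- z))"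
        using type unfolding zero_exponential_type_on_def by (metis UNIV_I norm_minus_cancel)
      show "norm (g (- of_real t)) \<le> M'" for t
        using \<open>\<And>t. norm (g (of_real t)) \<le> M'\<close>[of "- t"] by simp
    qed (use that in simp)
    then show ?thesis
      by simp
  qed
  ultimately have "norm (g w) \<le> M'" for w
    by (meson not_le)
  then show "bounded (range g)"
    unfolding bounded_iff by blast
qed

section \<open>Exponential generating functions\<close>

definition egf :: "(nat \<Rightarrow> real) \<Rightarrow> 'a::{real_normed_field,banach} \<Rightarrow> 'a" where
  "egf a s = (\<Sum>j. of_real (a j / fact j) * s ^ j)"

definition binomial_transform :: "(nat \<Rightarrow> real) \<Rightarrow> nat \<Rightarrow> real" where
  "binomial_transform a k = (\<Sum>j\<le>k. of_nat (k choose j) * a j)"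

lemma exp_sums_real: "(\<lambda>n. r ^ n / fact n) sums exp (r::real)"
  using exp_converges[of r] by (simp add: divide_inverse mult.commute)

lemma summable_norm_egf:
  fixes s :: "'a::{real_normed_field,banach}"
  assumes "\<And>j. \<bar>a j\<bar> \<le> A"
  shows "summable (\<lambda>j. norm (of_real (a j / fact j) * s ^ j))"
proof (rule summable_comparison_test')
  show "summable (\<lambda>j. A * (norm s ^ j / fact j))"
    using exp_sums_real by (intro summable_mult sums_summable)
  show "norm (norm (of_real (a j / fact j) * s ^ j)) \<le> A * (norm s ^ j / fact j)" for j
    using mult_right_mono[OF assms[of j], of "norm s ^ j / fact j"]
    by (simp add: norm_mult norm_power norm_divide)
qed

lemma egf_sums:
  fixes s :: "'a::{real_normed_field,banach}"
  assumes "\<And>j. \<bar>a j\<bar> \<le> A"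
  shows "(\<lambda>j. of_real (a j / fact j) * s ^ j) sums egf a s"
  unfolding egf_def by (rule summable_sums[OF summable_norm_cancel[OF summable_norm_egf[OF assms]]])

lemma egf_of_real:
  assumes "\<And>j. \<bar>a j\<bar> \<le> A"
  shows "egf a (of_real s :: 'a::{real_normed_field,banach}) = of_real (egf a s)"
  using sums_of_real[OF egf_sums[where a=a and s=s, OF assms], where 'a='a]
  by (intro sums_unique2[OF egf_sums[where a=a, OF assms]]) simp

lemma egf_add:
  fixes s :: "'a::{real_normed_field,banach}"
  assumes "\<And>j. \<bar>a j\<bar> \<le> A" "\<And>j. \<bar>b j\<bar> \<le> B"
  shows "egf (\<lambda>j. a j + b j) s = egf a s + egf b s"
  unfolding egf_def
  using suminf_add[OF sums_summable[OF egf_sums[where a=a and s=s, OF assms(1)]]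
      sums_summable[OF egf_sums[where a=b and s=s, OF assms(2)]]]
  by (simp add: add_divide_distrib distrib_right)

lemma abs_egf_le:
  assumes "\<And>k. \<bar>b k\<bar> \<le> B" and "s \<ge> 0"
  shows "\<bar>egf b s\<bar> \<le> B * exp s"
proof -
  have summable: "summable (\<lambda>k. \<bar>b k / fact k * s ^ k\<bar>)"
    using summable_norm_egf[where a=b and s=s, OF assms(1)] by simp
  have "\<bar>egf b s\<bar> \<le> (\<Sum>k. \<bar>b k / fact k * s ^ k\<bar>)"
    using summable_rabs[OF summable] by (simp add: egf_def)
  also have "\<dots> \<le> (\<Sum>k. B * (s ^ k / fact k))"
  proof (rule suminf_le[OF _ summable])
    show "\<bar>b k / fact k * s ^ k\<bar> \<le> B * (s ^ k / fact k)" for k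
      using mult_right_mono[OF assms(1)[of k], of "s ^ k / fact k"] \<open>s \<ge> 0\<close> by (simp add: abs_mult)
    show "summable (\<lambda>k. B * (s ^ k / fact k))"
      using exp_sums_real by (intro summable_mult sums_summable)
  qed
  also have "\<dots> = B * exp s"
    using sums_unique[OF sums_mult[OF exp_sums_real[of s], of B]] by simp
  finally show ?thesis .
qed

lemma exp_mult_egf:
  assumes "\<And>j. \<bar>a j\<bar> \<le> A"
  shows "exp s * egf a s = egf (binomial_transform a) (s::real)"
proof -
  have coefficient: "(\<Sum>i\<le>k. a i / fact i * s ^ i * (s ^ (k - i) / fact (k - i)))
      = binomial_transform a k / fact k * s ^ k" for k
  proof -
    have "a i / fact i * s ^ i * (s ^ (k - i) / fact (k - i)) = of_nat (k choose i) * a i / fact k * s ^ k"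
      if "i \<le> k" for i
      using that by (simp add: binomial_fact power_add[symmetric] field_simps)
    then show ?thesis
      unfolding binomial_transform_def by (simp add: sum_distrib_right sum_divide_distrib)
  qed
  have "egf a s * exp s = (\<Sum>k. \<Sum>i\<le>k. a i / fact i * s ^ i * (s ^ (k - i) / fact (k - i)))"
    unfolding sums_unique[OF exp_sums_real] egf_def of_real_eq_id id_def
  proof (rule Cauchy_product)
    show "summable (\<lambda>j. norm (a j / fact j * s ^ j))"
      using summable_norm_egf[where a=a and s=s, OF assms] by simp
    show "summable (\<lambda>n. norm (s ^ n / fact n))"
      using sums_summable[OF exp_sums_real[of "\<bar>s\<bar>"]] by (simp add: power_abs)
  qed
  then show ?thesis
    unfolding coefficient by (simp add: egf_def mult.commute)
qed

lemma egf_div_exp_tendsto_zero: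
  assumes "b \<longlonglongrightarrow> 0"
  shows "((\<lambda>s::real. egf b s / exp s) \<longlongrightarrow> 0) at_top"
proof (rule tendstoI)
  fix e :: real
  assume "e > 0"
  then obtain N where N: "\<And>k. k \<ge> N \<Longrightarrow> \<bar>b k\<bar> < e / 2"
    using LIMSEQ_D[OF assms, of "e / 2"] by auto
  define head where "head k = (if k < N then b k else 0)" for k
  define tail where "tail k = (if k < N then 0 else b k)" for k
  have head_bound: "\<bar>head k\<bar> \<le> (\<Sum>i<N. \<bar>b i\<bar>)" for k
    unfolding head_def by (auto intro: member_le_sum)
  have tail_bound: "\<bar>tail k\<bar> \<le> e / 2" for k
    unfolding tail_def using N[of k] \<open>e > 0\<close> by auto
  have head_finite: "egf head s = (\<Sum>k<N. b k / fact k * s ^ k)" for s :: real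
    unfolding egf_def by (subst suminf_finite[of "{..<N}"]) (auto simp: head_def)
  have head_eq: "egf head s / exp s = (\<Sum>k<N. b k / fact k * (s ^ k / exp s))" for s
    by (simp add: head_finite sum_divide_distrib)
  have "((\<lambda>s::real. egf head s / exp s) \<longlongrightarrow> 0) at_top"
    unfolding head_eq by (intro tendsto_null_sum tendsto_mult_right_zero tendsto_power_div_exp_0)
  then have "eventually (\<lambda>s::real. \<bar>egf head s / exp s\<bar> < e / 2) at_top"
    using \<open>e > 0\<close> by (intro order_tendstoD(2)[OF tendsto_rabs_zero]) auto
  then show "eventually (\<lambda>s::real. dist (egf b s / exp s) 0 < e) at_top"
    using eventually_ge_at_top[of "0::real"]
  proof eventually_elim
    case (elim s)
    have "b = (\<lambda>j. head j + tail j)"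
      by (simp add: fun_eq_iff head_def tail_def)
    then have "dist (egf b s / exp s) 0 = \<bar>egf head s / exp s + egf tail s / exp s\<bar>"
      using egf_add[where a=head and b=tail and s=s, OF head_bound tail_bound]
      by (simp add: dist_real_def add_divide_distrib)
    moreover have "\<bar>egf tail s / exp s\<bar> \<le> e / 2"
      using abs_egf_le[OF tail_bound elim(2)] by (simp add: abs_divide divide_le_eq)
    ultimately show ?case
      using elim(1) abs_triangle_ineq[of "egf head s / exp s" "egf tail s / exp s"] by linarith
  qed
qed

lemma holomorphic_egf:
  assumes "\<And>j. \<bar>a j\<bar> \<le> A"
  shows "egf a holomorphic_on UNIV"
proof -
  have "egf a field_differentiable (at s)" for s
    using termdiffs_strong_converges_everywhere[OF sums_summable[OF egf_sums[where a=a, OF assms]]]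
    unfolding field_differentiable_def egf_def[abs_def] by blast
  then show ?thesis
    unfolding holomorphic_on_def using field_differentiable_at_within by blast
qed

text \<open>Equivalent to \<open>\<bar>a n\<bar> powr (1 / n) = o(1 / n)\<close>, the growth condition of the theorem.\<close>
definition fast_decaying :: "(nat \<Rightarrow> real) \<Rightarrow> bool" where
  "fast_decaying a \<longleftrightarrow> (\<forall>\<eta>>0. \<exists>K. \<forall>n. \<bar>a n\<bar> \<le> K * (\<eta> / real n) ^ n)"

lemma fast_decaying_bounded:
  assumes "fast_decaying a"
  obtains A where "\<And>n. \<bar>a n\<bar> \<le> A"
proof -
  obtain K where K: "\<And>n. \<bar>a n\<bar> \<le> K * (1 / real n) ^ n"
    using assms zero_less_one unfolding fast_decaying_def by blast
  have "K \<ge> 0"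
    using K[of 0] by simp
  have "\<bar>a n\<bar> \<le> K" for n
  proof -
    have "(1 / real n) ^ n \<le> 1"
      by (rule power_le_one) (auto simp: divide_le_eq)
    then show ?thesis
      using K[of n] mult_left_mono[OF _ \<open>K \<ge> 0\<close>] by fastforce
  qed
  then show thesis
    by (rule that)
qed

lemma fast_decaying_mono:
  assumes "fast_decaying a" "\<And>n. \<bar>b n\<bar> \<le> c * \<bar>a n\<bar>"
  shows "fast_decaying b"
  unfolding fast_decaying_def
proof (intro allI impI)
  fix \<eta> :: real
  assume "\<eta> > 0"
  then obtain K where K: "\<And>n. \<bar>a n\<bar> \<le> K * (\<eta> / real n) ^ n"
    using assms(1) unfolding fast_decaying_def by blast
  have "\<bar>b n\<bar> \<le> (\<bar>c\<bar> * K) * (\<eta> / real n) ^ n" for n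
  proof -
    have "\<bar>b n\<bar> \<le> \<bar>c\<bar> * \<bar>a n\<bar>"
      using assms(2)[of n] abs_ge_self[of c] mult_right_mono[of c "\<bar>c\<bar>" "\<bar>a n\<bar>"] by simp
    also have "\<dots> \<le> \<bar>c\<bar> * (K * (\<eta> / real n) ^ n)"
      using K[of n] by (intro mult_left_mono) auto
    finally show ?thesis
      by (simp add: mult.assoc)
  qed
  then show "\<exists>K. \<forall>n. \<bar>b n\<bar> \<le> K * (\<eta> / real n) ^ n"
    by blast
qed

lemma eventually_le_imp_le_const_mult:
  fixes f g :: "nat \<Rightarrow> real"
  assumes "eventually (\<lambda>n. f n \<le> g n) sequentially" and pos: "\<And>n. g n > 0"
  shows "\<exists>K. \<forall>n. f n \<le> K * g n"
proof -
  obtain N where N: "\<And>n. n \<ge> N \<Longrightarrow> f n \<le> g n"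
    using assms(1) unfolding eventually_sequentially by blast
  define K where "K = 1 + (\<Sum>j<N. \<bar>f j\<bar> / g j)"
  have "f n \<le> K * g n" for n
  proof (cases "n < N")
    case True
    have "\<bar>f n\<bar> / g n \<le> (\<Sum>j<N. \<bar>f j\<bar> / g j)"
      using True pos by (intro member_le_sum) (auto intro: divide_nonneg_pos)
    then have "f n / g n \<le> K"
      unfolding K_def by (smt (verit) abs_ge_self divide_right_mono pos)
    then show ?thesis
      using pos[of n] by (simp add: divide_le_eq)
  next
    case False
    have "0 \<le> (\<Sum>j<N. \<bar>f j\<bar> / g j)"
      using pos by (intro sum_nonneg) (auto intro: divide_nonneg_pos)
    then have "g n \<le> K * g n"
      using pos[of n] by (simp add: K_def algebra_simps)
    then show ?thesis
      using N[of n] False by simp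
  qed
  then show ?thesis
    by blast
qed

lemma smallo_root_imp_fast_decaying:
  fixes f :: "nat \<Rightarrow> real"
  assumes nonneg: "\<And>n. f n \<ge> 0"
    and small: "(\<lambda>n. f n powr (1 / real n)) \<in> o(\<lambda>n. 1 / real n)"
  shows "fast_decaying f"
  unfolding fast_decaying_def
proof (intro allI impI)
  fix \<eta> :: real
  assume "\<eta> > 0"
  have "eventually (\<lambda>n. f n powr (1 / real n) \<le> \<eta> / real n) sequentially"
    using landau_o.smallD[OF small \<open>\<eta> > 0\<close>] nonneg by (simp add: divide_inverse)
  then have "eventually (\<lambda>n. f n \<le> (\<eta> / real n) ^ n) sequentially"
    using eventually_ge_at_top[of "1::nat"]
  proof eventually_elim
    case (elim n)
    have "f n = (f n powr (1 / real n)) ^ n" if "f n \<noteq> 0"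
      using that nonneg[of n] elim(2) by (simp add: powr_realpow[symmetric] powr_powr)
    moreover have "(f n powr (1 / real n)) ^ n \<le> (\<eta> / real n) ^ n"
      using elim(1) by (intro power_mono) auto
    ultimately show ?case
      using \<open>\<eta> > 0\<close> by (cases "f n = 0") auto
  qed
  moreover have "(\<eta> / real n) ^ n > 0" for n
    using \<open>\<eta> > 0\<close> by (cases n) auto
  ultimately have "\<exists>K. \<forall>n. f n \<le> K * (\<eta> / real n) ^ n"
    by (rule eventually_le_imp_le_const_mult)
  then show "\<exists>K. \<forall>n. \<bar>f n\<bar> \<le> K * (\<eta> / real n) ^ n"
    by (simp add: abs_of_nonneg nonneg)
qed

lemma fact_mult_2_le: "fact (2 * n) \<le> (fact n * (2 * n) ^ n :: nat)"
proof -
  have "fact (2 * n) div fact n \<le> (2 * n) ^ n"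
    using fact_div_fact_le_pow[of n "2 * n"] by simp
  moreover have "fact n dvd (fact (2 * n) :: nat)"
    by (rule fact_dvd) simp
  ultimately show ?thesis
    by (metis dvd_mult_div_cancel mult_le_mono2)
qed

lemma power_div_fact_le_double:
  fixes \<delta> :: real
  shows "((\<delta>\<^sup>2 / 2) / real n) ^ n / fact n \<le> \<delta> ^ (2 * n) / fact (2 * n)"
proof (cases "n = 0")
  case False
  have "(fact (2 * n) :: real) \<le> fact n * (2 * real n) ^ n"
    using of_nat_mono[OF fact_mult_2_le[of n], where 'a=real] by simp
  then have "\<delta> ^ (2 * n) / (fact n * (2 * real n) ^ n) \<le> \<delta> ^ (2 * n) / fact (2 * n)"
    using False by (intro divide_left_mono) (auto simp: power_mult)
  then show ?thesis
    using False by (simp add: power_divide power_mult power_mult_distrib power2_eq_square field_simps)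
qed simp

lemma exp_even_part:
  fixes r :: real
  assumes "r \<ge> 0"
  shows "summable (\<lambda>n. r ^ (2 * n) / fact (2 * n))" "(\<Sum>n. r ^ (2 * n) / fact (2 * n)) \<le> exp r"
proof -
  have "summable (\<lambda>n. r ^ n / fact n)" "(\<lambda>n. r ^ n / fact n) sums exp r"
    using exp_sums_real sums_summable by blast+
  moreover have "inj ((*) (2::nat))"
    by (simp add: inj_on_def)
  ultimately show "summable (\<lambda>n. r ^ (2 * n) / fact (2 * n))" "(\<Sum>n. r ^ (2 * n) / fact (2 * n)) \<le> exp r"
    using summable_reindex[of "\<lambda>n. r ^ n / fact n" "(*) 2"]
      suminf_reindex_mono[of "\<lambda>n. r ^ n / fact n" "(*) 2"] \<open>r \<ge> 0\<close>
    by (auto simp: o_def sums_unique[OF exp_sums_real[of r], symmetric])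
qed

text \<open>Termwise, \<open>\<bar>a n\<bar> / n!\<close> is dominated by \<open>\<delta>\<^sup>2\<^sup>n / (2n)!\<close>, so the series of \<open>egf a (w\<^sup>2)\<close> is
dominated by the even part of the series of \<open>exp (\<delta> \<parallel>w\<parallel>)\<close>.\<close>
lemma norm_egf_square_le:
  fixes w :: complex
  assumes "\<delta> \<ge> 0" and K: "\<And>n. \<bar>a n\<bar> \<le> K * ((\<delta>\<^sup>2 / 2) / real n) ^ n"
  shows "norm (egf a (w\<^sup>2)) \<le> K * exp (\<delta> * norm w)"
proof -
  define u where "u n = (\<delta> * norm w) ^ (2 * n) / fact (2 * n)" for n
  have "K \<ge> 0"
    using K[of 0] by simp
  have "\<delta> * norm w \<ge> 0"
    using \<open>\<delta> \<ge> 0\<close> by simp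
  note even = exp_even_part[OF this, folded u_def]
  have termwise: "norm (of_real (a n / fact n) * (w\<^sup>2) ^ n) \<le> K * u n" for n
  proof -
    have "norm (of_real (a n / fact n) * (w\<^sup>2) ^ n) = \<bar>a n\<bar> / fact n * norm w ^ (2 * n)"
      by (simp add: norm_mult norm_power norm_divide power_mult)
    also have "\<dots> \<le> K * (((\<delta>\<^sup>2 / 2) / real n) ^ n / fact n) * norm w ^ (2 * n)"
      using K[of n] by (intro mult_right_mono) (auto simp: divide_right_mono)
    also have "\<dots> \<le> K * (\<delta> ^ (2 * n) / fact (2 * n)) * norm w ^ (2 * n)"
      by (intro mult_right_mono mult_left_mono power_div_fact_le_double \<open>K \<ge> 0\<close>) simp
    also have "\<dots> = K * u n"
      by (simp add: u_def power_mult_distrib)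
    finally show ?thesis .
  qed
  have summable: "summable (\<lambda>n. norm (of_real (a n / fact n) * (w\<^sup>2) ^ n))"
    using termwise by (intro summable_comparison_test'[OF summable_mult[OF even(1)]]) simp
  have "norm (egf a (w\<^sup>2)) \<le> (\<Sum>n. norm (of_real (a n / fact n) * (w\<^sup>2) ^ n))"
    unfolding egf_def by (rule summable_norm[OF summable])
  also have "\<dots> \<le> (\<Sum>n. K * u n)"
    by (rule suminf_le[OF termwise summable summable_mult[OF even(1)]])
  also have "\<dots> \<le> K * exp (\<delta> * norm w)"
    using suminf_mult[OF even(1), of K] even(2) \<open>K \<ge> 0\<close> by (simp add: mult_left_mono)
  finally show ?thesis .
qed

lemma zero_exponential_type_egf_square:
  assumes "fast_decaying a"
  shows "zero_exponential_type_on UNIV (\<lambda>w. egf a (w\<^sup>2))"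
  unfolding zero_exponential_type_on_def
proof (intro allI impI)
  fix \<delta> :: real
  assume "\<delta> > 0"
  then have "\<delta>\<^sup>2 / 2 > 0"
    by simp
  then obtain K where "\<And>n. \<bar>a n\<bar> \<le> K * ((\<delta>\<^sup>2 / 2) / real n) ^ n"
    using assms unfolding fast_decaying_def by blast
  then have "norm (egf a (w\<^sup>2)) \<le> K * exp (\<delta> * norm w)" for w :: complex
    using norm_egf_square_le \<open>\<delta> > 0\<close> by simp
  then show "\<exists>C. \<forall>w\<in>UNIV. norm (egf a (w\<^sup>2) :: complex) \<le> C * exp (\<delta> * norm w)"
    by blast
qed

lemma egf_at_0: "egf a 0 = of_real (a 0)"
  unfolding egf_def by (subst powser_zero) simp

text \<open>On the real axis \<open>w \<mapsto> egf a (w\<^sup>2)\<close> takes the values of \<open>egf a\<close> on \<open>[0, \<infinity>)\<close>, so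
Phragm\<acute>en--Lindel\<ouml>f forces it to be constant.\<close>
lemma egf_constant_if_bounded_on_nonneg:
  fixes s B :: real
  assumes "fast_decaying a" and bounded: "\<And>s. s \<ge> 0 \<Longrightarrow> \<bar>egf a s\<bar> \<le> B" and "s \<ge> 0"
  shows "egf a s = a 0"
proof -
  obtain A where A: "\<And>n. \<bar>a n\<bar> \<le> A"
    using fast_decaying_bounded[OF assms(1)] by blast
  define g where "g w = (egf a (w\<^sup>2) :: complex)" for w
  have "g holomorphic_on UNIV"
    unfolding g_def
    by (rule holomorphic_on_compose_gen[of power2 UNIV "egf a" UNIV, unfolded o_def, OF _ holomorphic_egf[OF A]])
      (simp_all add: holomorphic_on_power holomorphic_on_id)
  moreover have "zero_exponential_type_on UNIV g"
    unfolding g_def by (rule zero_exponential_type_egf_square[OF assms(1)])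
  moreover have "norm (g (of_real t)) \<le> B" for t
    using bounded[of "t\<^sup>2"] by (simp add: g_def egf_of_real[OF A] flip: of_real_power)
  ultimately have "g constant_on UNIV"
    by (rule zero_exponential_type_bounded_on_real_axis_constant)
  then have "g (of_real (sqrt s)) = g 0"
    unfolding constant_on_def by (metis UNIV_I)
  then show ?thesis
    using \<open>s \<ge> 0\<close> by (simp add: g_def egf_of_real[OF A] egf_at_0 flip: of_real_power)
qed

text \<open>Here \<open>exp s \<cdot> egf a s = egf (binomial_transform a) s\<close> is \<open>o(exp s)\<close>, so \<open>egf a\<close> tends to
zero along the positive reals while being constant there.\<close>
lemma fast_decaying_binomial_transform_tendsto_zero:
  assumes "fast_decaying a" and "binomial_transform a \<longlonglongrightarrow> 0"
  shows "a 0 = 0"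
proof -
  obtain A where A: "\<And>n. \<bar>a n\<bar> \<le> A"
    using fast_decaying_bounded[OF assms(1)] by blast
  obtain B where B: "\<And>k. \<bar>binomial_transform a k\<bar> \<le> B"
    using BseqE[OF convergent_imp_Bseq[OF convergentI[OF assms(2)]]] by (metis real_norm_def)
  have egf_eq: "egf a s = egf (binomial_transform a) s / exp s" for s :: real
    using exp_mult_egf[OF A, of s] by (simp add: field_simps)
  have "\<bar>egf a s\<bar> \<le> B" if "s \<ge> 0" for s
    using abs_egf_le[OF B that] by (simp add: egf_eq abs_divide divide_le_eq)
  then have "egf a s = a 0" if "s \<ge> 0" for s :: real
    using egf_constant_if_bounded_on_nonneg[OF assms(1)] that by blast
  then have "((\<lambda>s::real. egf a s) \<longlongrightarrow> a 0) at_top"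
    by (intro tendsto_eventually) (auto intro: eventually_mono[OF eventually_ge_at_top[of 0]])
  moreover have "((\<lambda>s::real. egf a s) \<longlongrightarrow> 0) at_top"
    unfolding egf_eq by (rule egf_div_exp_tendsto_zero[OF assms(2)])
  ultimately show ?thesis
    using tendsto_unique by (metis trivial_limit_at_top_linorder)
qed

section \<open>Powers of \<open>I + T\<close>\<close>

lemma bounded_linear_funpow:
  fixes T :: "'a::real_normed_vector \<Rightarrow> 'a"
  assumes "bounded_linear T"
  shows "bounded_linear (T ^^ n)"
proof (induction n)
  case 0
  show ?case
    by (simp add: id_def bounded_linear_ident)
next
  case (Suc n)
  show ?case
    unfolding funpow.simps(2) o_def by (rule bounded_linear_compose[OF assms Suc.IH])
qed

lemma funpow_id_plus_binomial:
  fixes T :: "'a::real_vector \<Rightarrow> 'a"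
  assumes "linear T"
  shows "((\<lambda>v. v + T v) ^^ k) x = (\<Sum>j\<le>k. of_nat (k choose j) *\<^sub>R (T ^^ j) x)"
proof (induction k)
  case 0
  then show ?case
    by simp
next
  case (Suc k)
  let ?S = "\<Sum>j\<le>k. of_nat (k choose j) *\<^sub>R (T ^^ j) x"
  have "T ?S = (\<Sum>j\<le>k. of_nat (k choose j) *\<^sub>R (T ^^ Suc j) x)"
    by (simp add: linear_sum[OF assms] linear_scale[OF assms])
  moreover have "?S = (\<Sum>j\<le>Suc k. of_nat (k choose j) *\<^sub>R (T ^^ j) x)"
    by simp
  then have "?S = x + (\<Sum>j\<le>k. of_nat (k choose Suc j) *\<^sub>R (T ^^ Suc j) x)"
    by (simp only: sum.atMost_Suc_shift) simp
  ultimately have "?S + T ?S = x + (\<Sum>j\<le>k. of_nat (Suc k choose Suc j) *\<^sub>R (T ^^ Suc j) x)"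
    by (simp add: sum.distrib scaleR_add_left algebra_simps)
  also have "\<dots> = (\<Sum>j\<le>Suc k. of_nat (Suc k choose j) *\<^sub>R (T ^^ j) x)"
    by (subst sum.atMost_Suc_shift) simp
  finally show ?case
    using Suc.IH by simp
qed

lemma id_plus_orbit_tendsto_zero_imp_zero:
  fixes T :: "'a::real_normed_vector \<Rightarrow> 'a"
  assumes bl: "bounded_linear T"
    and growth: "(\<lambda>n. onorm (T ^^ n) powr (1 / real n)) \<in> o(\<lambda>n. 1 / real n)"
    and orbit: "(\<lambda>k. ((\<lambda>v. v + T v) ^^ k) x) \<longlonglongrightarrow> 0"
  shows "x = 0"
proof -
  obtain \<phi> :: "'a \<Rightarrow> real" where lin: "linear \<phi>" and le_norm: "\<And>v. \<bar>\<phi> v\<bar> \<le> norm v"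
    and "\<phi> x = norm x"
    using norming_functional_exists by blast
  define a where "a j = \<phi> ((T ^^ j) x)" for j
  have "\<bar>a j\<bar> \<le> norm x * \<bar>onorm (T ^^ j)\<bar>" for j
    using le_norm[of "(T ^^ j) x"] onorm[OF bounded_linear_funpow[OF bl], of j x]
      onorm_pos_le[OF bounded_linear_funpow[OF bl], of j]
    by (simp add: a_def mult.commute)
  then have "fast_decaying a"
    by (intro fast_decaying_mono[OF smallo_root_imp_fast_decaying[OF _ growth]]
        onorm_pos_le bounded_linear_funpow bl)
  moreover have "binomial_transform a k = \<phi> (((\<lambda>v. v + T v) ^^ k) x)" for k
    by (simp add: binomial_transform_def a_def funpow_id_plus_binomial[OF bounded_linear.linear[OF bl]]
        linear_sum[OF lin] linear_scale[OF lin])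
  then have "binomial_transform a \<longlonglongrightarrow> 0"
    using le_norm by (intro Lim_null_comparison[OF _ tendsto_norm_zero[OF orbit]]) simp
  ultimately have "a 0 = 0"
    by (rule fast_decaying_binomial_transform_tendsto_zero)
  then show ?thesis
    using \<open>\<phi> x = norm x\<close> by (simp add: a_def)
qed

theorem corollary3p3:
  fixes T :: "'a::banach \<Rightarrow> 'a"
  assumes nontriv: "\<exists>x::'a. x \<noteq> 0"
    and bl: "bounded_linear T"
    and growth: "(\<lambda>n. onorm (T ^^ n) powr (1 / real n)) \<in> o(\<lambda>n. 1 / real n)"
  shows "\<not> kitai_criterion (\<lambda>x. x + T x)"
proof
  assume "kitai_criterion (\<lambda>x. x + T x)"
  then obtain E :: "'a set" where dense: "closure E = UNIV"
    and orbits: "\<And>x. x \<in> E \<Longrightarrow> (\<lambda>k. ((\<lambda>x. x + T x) ^^ k) x) \<longlonglongrightarrow> 0"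
    unfolding kitai_criterion_def by blast
  have "E \<subseteq> {0}"
    using id_plus_orbit_tendsto_zero_imp_zero[OF bl growth orbits] by blast
  then have "closure E \<subseteq> {0}"
    by (metis closure_mono closure_closed closed_singleton)
  with dense nontriv show False
    by blast
qed

end
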